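(* Let $X$ be a finite connected poset, $F$ a field with $\mathrm{char}(F)=2$, and $\varphi$ a Lie automorphism of $I(X,F)$. The following are equivalent: (1) $\varphi(f^2)=\varphi(f)^2$ for all $f\in I(X,F)$; (2) $\varphi(E(I(X,F)))\subseteq E(I(X,F))$; (3) $\varphi(e_x)$ is an idempotent for every $x\in X$.
   Context: $I(X,F)$ is the incidence algebra of the locally finite poset $X$ over $F$ (functions $f:X\times X\to F$ vanishing unless $x\le y$, with product $(fg)(x,y)=\sum_{x\le z\le y}f(x,z)g(z,y)$). For $x\le y$, $e_{xy}\in I(X,F)$ is the function equal to $1$ at $(x,y)$ and $0$ elsewhere, and $e_x:=e_{xx}$. A poset is connected if any two elements are joined by a finite sequence of elements in which consecutive elements are comparable. $E(A)$ denotes the idempotents of $A$. In characteristic $2$, a Lie automorphism of $I(X,F)$ is a bijective $F$-linear map $\varphi$ with $\varphi(ab+ba)=\varphi(a)\varphi(b)+\varphi(b)\varphi(a)$ for all $a,b$. *)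

theory Defs
  imports Main
begin

text \<open>The poset X is the (finite) type 'a with its order. Elements of the incidence
algebra I(X,F) are functions f :: 'a => 'a => 'f vanishing off the order relation.\<close>

definition incidence_algebra :: "('a::order \<Rightarrow> 'a \<Rightarrow> 'f::field) set" where
  "incidence_algebra = {f. \<forall>x y. \<not> x \<le> y \<longrightarrow> f x y = 0}"

definition inc_mult :: "('a::order \<Rightarrow> 'a \<Rightarrow> 'f::field) \<Rightarrow> ('a \<Rightarrow> 'a \<Rightarrow> 'f) \<Rightarrow> ('a \<Rightarrow> 'a \<Rightarrow> 'f)" where
  "inc_mult f g = (\<lambda>x y. \<Sum>z\<in>{z. x \<le> z \<and> z \<le> y}. f x z * g z y)"

definition inc_e :: "'a::order \<Rightarrow> ('a \<Rightarrow> 'a \<Rightarrow> 'f::field)" where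
  "inc_e x = (\<lambda>u v. if u = x \<and> v = x then 1 else 0)"

definition inc_idempotents :: "('a::order \<Rightarrow> 'a \<Rightarrow> 'f::field) set" where
  "inc_idempotents = {f \<in> incidence_algebra. inc_mult f f = f}"

definition poset_connected :: "'a::order itself \<Rightarrow> bool" where
  "poset_connected _ = (\<forall>x y::'a. \<exists>xs. xs \<noteq> [] \<and> hd xs = x \<and> last xs = y \<and>
      (\<forall>i < length xs - 1. xs ! i \<le> xs ! Suc i \<or> xs ! Suc i \<le> xs ! i))"

definition lie_automorphism :: "(('a::order \<Rightarrow> 'a \<Rightarrow> 'f::field) \<Rightarrow> ('a \<Rightarrow> 'a \<Rightarrow> 'f)) \<Rightarrow> bool" where
  "lie_automorphism \<phi> \<longleftrightarrow>
     bij_betw \<phi> incidence_algebra incidence_algebra \<and>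
     (\<forall>f\<in>incidence_algebra. \<forall>g\<in>incidence_algebra. \<phi> (\<lambda>x y. f x y + g x y) = (\<lambda>x y. \<phi> f x y + \<phi> g x y)) \<and>
     (\<forall>c. \<forall>f\<in>incidence_algebra. \<phi> (\<lambda>x y. c * f x y) = (\<lambda>x y. c * \<phi> f x y)) \<and>
     (\<forall>a\<in>incidence_algebra. \<forall>b\<in>incidence_algebra.
        \<phi> (\<lambda>x y. inc_mult a b x y + inc_mult b a x y) =
          (\<lambda>x y. inc_mult (\<phi> a) (\<phi> b) x y + inc_mult (\<phi> b) (\<phi> a) x y))"

end

theory Submission
  imports Defs "HOL-Library.Function_Algebras"
begin

text \<open>
  Consider the square defect \<open>\<delta>(f) = \<phi>(f\<^sup>2) - \<phi>(f)\<^sup>2\<close>. Since \<open>\<phi>\<close> preserves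
  \<open>ab + ba\<close> (which in characteristic 2 is the Lie bracket), \<open>\<delta>\<close> is additive with
  \<open>\<delta>(cf) = c\<^sup>2 \<delta>(f)\<close>, and the identity \<open>[f\<^sup>2, g] = [f, [f, g]]\<close> together with
  surjectivity shows that \<open>\<delta>(f)\<close> is central. A central element of \<open>I(X,F)\<close> with zero
  diagonal is zero. If every \<open>\<phi>(e\<^sub>x)\<close> is idempotent then \<open>\<delta>(e\<^sub>x) = 0\<close>; for
  \<open>x < y\<close> the relations \<open>e\<^sub>x\<^sub>y = e\<^sub>x e\<^sub>x\<^sub>y + e\<^sub>x\<^sub>y e\<^sub>x\<close> and
  \<open>e\<^sub>x\<^sub>y\<^sup>2 = 0\<close> force \<open>\<phi>(e\<^sub>x\<^sub>y)\<close> to have zero diagonal, so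
  \<open>\<delta>(e\<^sub>x\<^sub>y) = -\<phi>(e\<^sub>x\<^sub>y)\<^sup>2\<close> is central with zero diagonal, hence zero. By
  additivity \<open>\<delta>\<close> vanishes on all of \<open>I(X,F)\<close>, which is (1).
\<close>

definition inc_scale :: "'f::field \<Rightarrow> ('a \<Rightarrow> 'a \<Rightarrow> 'f) \<Rightarrow> ('a \<Rightarrow> 'a \<Rightarrow> 'f)" where
  "inc_scale c f = (\<lambda>x y. c * f x y)"

definition inc_jordan :: "('a::order \<Rightarrow> 'a \<Rightarrow> 'f::field) \<Rightarrow> ('a \<Rightarrow> 'a \<Rightarrow> 'f) \<Rightarrow> ('a \<Rightarrow> 'a \<Rightarrow> 'f)" where
  "inc_jordan a b = inc_mult a b + inc_mult b a"

definition inc_unit :: "'a \<Rightarrow> 'a \<Rightarrow> ('a \<Rightarrow> 'a \<Rightarrow> 'f::field)" where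
  "inc_unit u v = (\<lambda>x y. if x = u \<and> y = v then 1 else 0)"

lemma sum_fun_apply: "(\<Sum>i\<in>S. f i) x = (\<Sum>i\<in>S. f i x)"
  by (induction S rule: infinite_finite_induct) auto

lemma inc_e_eq_inc_unit: "inc_e x = inc_unit x x"
  by (simp add: inc_e_def inc_unit_def)

lemma incidence_algebra_zero [simp]: "0 \<in> incidence_algebra"
  by (simp add: incidence_algebra_def)

lemma incidence_algebra_add [intro]:
  "f \<in> incidence_algebra \<Longrightarrow> g \<in> incidence_algebra \<Longrightarrow> f + g \<in> incidence_algebra"
  by (simp add: incidence_algebra_def)

lemma incidence_algebra_diff [intro]:
  "f \<in> incidence_algebra \<Longrightarrow> g \<in> incidence_algebra \<Longrightarrow> f - g \<in> incidence_algebra"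
  by (simp add: incidence_algebra_def)

lemma incidence_algebra_scale [intro]: "f \<in> incidence_algebra \<Longrightarrow> inc_scale c f \<in> incidence_algebra"
  by (simp add: incidence_algebra_def inc_scale_def)

lemma incidence_algebra_inc_mult [simp]: "inc_mult f g \<in> incidence_algebra"
  unfolding incidence_algebra_def inc_mult_def
  by (auto intro!: sum.neutral dest: order_trans)

lemma incidence_algebra_inc_jordan [simp]: "inc_jordan f g \<in> incidence_algebra"
  by (auto simp: inc_jordan_def)

lemma incidence_algebra_inc_unit [intro]: "u \<le> v \<Longrightarrow> inc_unit u v \<in> incidence_algebra"
  by (auto simp: inc_unit_def incidence_algebra_def)

lemma incidence_algebra_inc_e [simp]: "inc_e x \<in> incidence_algebra"
  by (auto simp: inc_e_eq_inc_unit)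

lemma incidence_algebra_sum:
  "(\<And>i. i \<in> S \<Longrightarrow> f i \<in> incidence_algebra) \<Longrightarrow> (\<Sum>i\<in>S. f i) \<in> incidence_algebra"
  by (induction S rule: infinite_finite_induct) auto

lemma inc_scale_inc_unit: "inc_scale c (inc_unit u v) = (\<lambda>x y. if x = u \<and> y = v then c else 0)"
  by (simp add: inc_scale_def inc_unit_def fun_eq_iff)

lemma incidence_algebra_unit_expansion:
  fixes f :: "'a::{order,finite} \<Rightarrow> 'a \<Rightarrow> 'f::field"
  assumes "f \<in> incidence_algebra"
  shows "f = (\<Sum>u\<in>UNIV. \<Sum>v\<in>{v. u \<le> v}. inc_scale (f u v) (inc_unit u v))"
proof (intro ext)
  fix x y
  have "(\<Sum>u\<in>UNIV. \<Sum>v\<in>{v. u \<le> v}. inc_scale (f u v) (inc_unit u v)) x y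
      = (\<Sum>u\<in>UNIV. if u = x then \<Sum>v\<in>{v. x \<le> v}. if v = y then f x v else 0 else 0)"
    unfolding sum_fun_apply inc_scale_inc_unit by (intro sum.cong) auto
  also have "\<dots> = f x y"
    using assms by (simp add: sum.delta incidence_algebra_def)
  finally show "f x y = (\<Sum>u\<in>UNIV. \<Sum>v\<in>{v. u \<le> v}. inc_scale (f u v) (inc_unit u v)) x y"
    by (rule sym)
qed

lemma additive_map_zero:
  fixes \<psi> :: "('a::order \<Rightarrow> 'a \<Rightarrow> 'f::field) \<Rightarrow> ('a \<Rightarrow> 'a \<Rightarrow> 'f)"
  assumes "\<And>f g. f \<in> incidence_algebra \<Longrightarrow> g \<in> incidence_algebra \<Longrightarrow> \<psi> (f + g) = \<psi> f + \<psi> g"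
  shows "\<psi> 0 = 0"
  using assms[of 0 0] by simp

lemma additive_map_sum_vanishing:
  fixes \<psi> :: "('a::order \<Rightarrow> 'a \<Rightarrow> 'f::field) \<Rightarrow> ('a \<Rightarrow> 'a \<Rightarrow> 'f)"
  assumes additive: "\<And>f g. f \<in> incidence_algebra \<Longrightarrow> g \<in> incidence_algebra \<Longrightarrow> \<psi> (f + g) = \<psi> f + \<psi> g"
    and "\<And>i. i \<in> S \<Longrightarrow> h i \<in> incidence_algebra" "\<And>i. i \<in> S \<Longrightarrow> \<psi> (h i) = 0"
  shows "\<psi> (\<Sum>i\<in>S. h i) = 0"
  using assms(2,3)
proof (induction S rule: infinite_finite_induct)
  case (insert i S)
  then have "\<psi> (\<Sum>i\<in>insert i S. h i) = \<psi> (h i) + \<psi> (\<Sum>i\<in>S. h i)"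
    by (simp add: additive incidence_algebra_sum)
  with insert.prems insert.IH show ?case by simp
qed (simp_all add: additive_map_zero[where \<psi> = \<psi>, OF additive])

lemma additive_map_vanishing_on_units:
  fixes \<psi> :: "('a::{order,finite} \<Rightarrow> 'a \<Rightarrow> 'f::field) \<Rightarrow> ('a \<Rightarrow> 'a \<Rightarrow> 'f)"
  assumes additive: "\<And>f g. f \<in> incidence_algebra \<Longrightarrow> g \<in> incidence_algebra \<Longrightarrow> \<psi> (f + g) = \<psi> f + \<psi> g"
    and units: "\<And>c u v. u \<le> v \<Longrightarrow> \<psi> (inc_scale c (inc_unit u v)) = 0"
    and f: "f \<in> incidence_algebra"
  shows "\<psi> f = 0"
proof -
  have "\<psi> (\<Sum>u\<in>UNIV. \<Sum>v\<in>{v. u \<le> v}. inc_scale (f u v) (inc_unit u v)) = 0"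
    by (intro additive_map_sum_vanishing[where \<psi> = \<psi>, OF additive] incidence_algebra_sum
        incidence_algebra_scale incidence_algebra_inc_unit units) auto
  then show ?thesis
    using incidence_algebra_unit_expansion[OF f] by simp
qed

lemma inc_mult_diag: "inc_mult f g x x = f x x * g x x"
proof -
  have "{z. x \<le> z \<and> z \<le> x} = {x}" by (auto intro: antisym)
  then show ?thesis by (simp add: inc_mult_def)
qed

lemma inc_mult_inc_e_right:
  fixes f :: "'a::{order,finite} \<Rightarrow> 'a \<Rightarrow> 'f::field"
  assumes "f \<in> incidence_algebra"
  shows "inc_mult f (inc_e v) x y = (if y = v then f x v else 0)"
proof (cases "y = v \<and> x \<le> v")
  case True
  then show ?thesis
    by (simp add: inc_mult_def inc_e_def if_distrib if_distribR sum.delta sum.delta' cong: if_cong)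
next
  case False
  then show ?thesis using assms
    by (auto simp: inc_mult_def inc_e_def incidence_algebra_def intro!: sum.neutral)
qed

lemma inc_mult_inc_e_left:
  fixes f :: "'a::{order,finite} \<Rightarrow> 'a \<Rightarrow> 'f::field"
  assumes "f \<in> incidence_algebra"
  shows "inc_mult (inc_e v) f x y = (if x = v then f v y else 0)"
proof (cases "x = v \<and> v \<le> y")
  case True
  then show ?thesis
    by (simp add: inc_mult_def inc_e_def if_distrib if_distribR sum.delta sum.delta' cong: if_cong)
next
  case False
  then show ?thesis using assms
    by (auto simp: inc_mult_def inc_e_def incidence_algebra_def intro!: sum.neutral)
qed

lemma inc_mult_assoc:
  fixes f :: "'a::{order,finite} \<Rightarrow> 'a \<Rightarrow> 'f::field"
  shows "inc_mult (inc_mult f g) h = inc_mult f (inc_mult g h)"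
proof (intro ext)
  fix x y :: 'a
  have "inc_mult (inc_mult f g) h x y
      = (\<Sum>z\<in>{z. x \<le> z \<and> z \<le> y}. \<Sum>w\<in>{w\<in>{w. x \<le> w \<and> w \<le> y}. w \<le> z}. f x w * g w z * h z y)"
    unfolding inc_mult_def sum_distrib_right
    by (intro sum.cong refl) (auto intro: order_trans)
  also have "\<dots> = (\<Sum>w\<in>{w. x \<le> w \<and> w \<le> y}. \<Sum>z\<in>{z\<in>{z. x \<le> z \<and> z \<le> y}. w \<le> z}. f x w * g w z * h z y)"
    by (rule sum.swap_restrict) auto
  also have "\<dots> = inc_mult f (inc_mult g h) x y"
    unfolding inc_mult_def sum_distrib_left
    by (intro sum.cong refl) (auto intro: order_trans simp: mult.assoc)
  finally show "inc_mult (inc_mult f g) h x y = inc_mult f (inc_mult g h) x y" .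
qed

lemma inc_mult_add_left: "inc_mult (a + b) c = inc_mult a c + inc_mult b c"
  by (simp add: inc_mult_def distrib_right sum.distrib fun_eq_iff)

lemma inc_mult_add_right: "inc_mult c (a + b) = inc_mult c a + inc_mult c b"
  by (simp add: inc_mult_def distrib_left sum.distrib fun_eq_iff)

lemma inc_mult_diff_left: "inc_mult (a - b) c = inc_mult a c - inc_mult b c"
  by (simp add: inc_mult_def left_diff_distrib sum_subtractf fun_eq_iff)

lemma inc_mult_diff_right: "inc_mult c (a - b) = inc_mult c a - inc_mult c b"
  by (simp add: inc_mult_def right_diff_distrib sum_subtractf fun_eq_iff)

lemma inc_mult_scale_left: "inc_mult (inc_scale k a) c = inc_scale k (inc_mult a c)"
  by (simp add: inc_mult_def inc_scale_def sum_distrib_left mult.assoc)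

lemma inc_mult_scale_right: "inc_mult c (inc_scale k a) = inc_scale k (inc_mult c a)"
  by (simp add: inc_mult_def inc_scale_def sum_distrib_left mult.left_commute)

lemma inc_square_add: "inc_mult (f + g) (f + g) = inc_mult f f + inc_mult g g + inc_jordan f g"
  by (simp add: inc_mult_add_left inc_mult_add_right inc_jordan_def algebra_simps)

lemma inc_square_scale: "inc_mult (inc_scale c f) (inc_scale c f) = inc_scale (c * c) (inc_mult f f)"
  unfolding inc_mult_scale_left inc_mult_scale_right by (simp add: inc_scale_def mult.assoc)

lemma inc_e_idempotent:
  "inc_mult (inc_e x) (inc_e x) = (inc_e x :: 'a::{order,finite} \<Rightarrow> 'a \<Rightarrow> 'f::field)"
  by (simp add: inc_mult_inc_e_right fun_eq_iff) (simp add: inc_e_def)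

lemma inc_unit_square: "u \<noteq> v \<Longrightarrow> inc_mult (inc_unit u v) (inc_unit u v) = 0"
  by (auto simp: inc_mult_def inc_unit_def fun_eq_iff intro!: sum.neutral)

lemma inc_jordan_inc_e_inc_unit:
  fixes u :: "'a::{order,finite}"
  assumes "u < v"
  shows "inc_jordan (inc_e u) (inc_unit u v) = (inc_unit u v :: 'a \<Rightarrow> 'a \<Rightarrow> 'f::field)"
  using assms
  by (auto simp: inc_jordan_def fun_eq_iff inc_mult_inc_e_left inc_mult_inc_e_right
      incidence_algebra_inc_unit) (auto simp: inc_unit_def)

lemma central_with_zero_diagonal_eq_zero:
  fixes c :: "'a::{order,finite} \<Rightarrow> 'a \<Rightarrow> 'f::field"
  assumes "c \<in> incidence_algebra" "\<And>g. g \<in> incidence_algebra \<Longrightarrow> inc_mult c g = inc_mult g c"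
    and "\<And>z. c z z = 0"
  shows "c = 0"
proof (intro ext)
  fix x y :: 'a
  show "c x y = 0 x y"
  proof (cases "x = y")
    case True then show ?thesis using assms(3) by simp
  next
    case False
    have "inc_mult c (inc_e y) x y = inc_mult (inc_e y) c x y"
      using assms(2) by simp
    then show ?thesis using False assms(1) by (simp add: inc_mult_inc_e_right inc_mult_inc_e_left)
  qed
qed

subsection \<open>Characteristic two\<close>

lemma char2_add_self:
  assumes "CHAR('f::field) = 2"
  shows "(x::'f) + x = 0"
proof -
  have "x + x = (1 + 1) * x"
    by (simp only: distrib_right mult_1_left)
  also have "(1 + 1 :: 'f) = of_nat 2"
    by simp
  also have "of_nat 2 = (0::'f)"
    using of_nat_CHAR[where 'a = 'f] unfolding assms .
  finally show ?thesis
    by simp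
qed

lemma char2_fun_add_self:
  assumes "CHAR('f::field) = 2"
  shows "(g :: 'a \<Rightarrow> 'b \<Rightarrow> 'f) + g = 0"
  by (intro ext) (simp only: plus_fun_apply zero_fun_apply char2_add_self[OF assms])

lemma char2_uminus: "CHAR('f::field) = 2 \<Longrightarrow> - (x::'f) = x"
  by (simp add: neg_eq_iff_add_eq_0 char2_add_self)

lemma char2_diff_eq_add: "CHAR('f::field) = 2 \<Longrightarrow> (x::'f) - y = x + y"
  by (simp add: char2_uminus flip: diff_minus_eq_add)

lemma char2_inc_jordan_square:
  fixes f :: "'a::{order,finite} \<Rightarrow> 'a \<Rightarrow> 'f::field"
  assumes "CHAR('f) = 2"
  shows "inc_jordan (inc_mult f f) h = inc_jordan f (inc_jordan f h)"
proof -
  have "inc_jordan f (inc_jordan f h)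
      = inc_jordan (inc_mult f f) h + (inc_mult (inc_mult f h) f + inc_mult (inc_mult f h) f)"
    by (simp add: inc_jordan_def inc_mult_add_left inc_mult_add_right inc_mult_assoc algebra_simps)
  then show ?thesis
    by (simp add: char2_fun_add_self[OF assms])
qed

lemma char2_commute_iff_inc_jordan_eq:
  assumes "CHAR('f::field) = 2"
  shows "inc_mult (a - b) g = inc_mult g (a - b) \<longleftrightarrow>
    inc_jordan a g = inc_jordan (b :: 'a::order \<Rightarrow> 'a \<Rightarrow> 'f) g"
proof -
  have "inc_mult (a - b) g - inc_mult g (a - b) = inc_jordan a g - inc_jordan b g"
    by (simp add: inc_jordan_def inc_mult_diff_left inc_mult_diff_right fun_eq_iff
        char2_diff_eq_add[OF assms] ac_simps)
  then show ?thesis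
    by (metis eq_iff_diff_eq_0)
qed

lemma char2_inc_jordan_fixed_diagonal:
  assumes "CHAR('f::field) = 2" and "inc_jordan b a = (a :: 'a::order \<Rightarrow> 'a \<Rightarrow> 'f)"
  shows "a z z = 0"
proof -
  have "a z z = b z z * a z z + b z z * a z z"
    by (subst assms(2)[symmetric]) (simp add: inc_jordan_def inc_mult_diag mult.commute)
  then show ?thesis by (simp add: char2_add_self[OF assms(1)])
qed

lemma fun_plus_eq_pointwise: "f + g = (\<lambda>x y. f x y + g x y)"
  by (simp add: fun_eq_iff)

lemma lie_automorphism_image: "lie_automorphism \<phi> \<Longrightarrow> \<phi> ` incidence_algebra = incidence_algebra"
  by (simp add: lie_automorphism_def bij_betw_def)

lemma lie_automorphism_closed:
  "lie_automorphism \<phi> \<Longrightarrow> f \<in> incidence_algebra \<Longrightarrow> \<phi> f \<in> incidence_algebra"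
  using lie_automorphism_image by blast

lemma lie_automorphism_surj:
  "lie_automorphism \<phi> \<Longrightarrow> g \<in> incidence_algebra \<Longrightarrow> \<exists>h\<in>incidence_algebra. g = \<phi> h"
  using lie_automorphism_image by blast

lemma lie_automorphism_add:
  "lie_automorphism \<phi> \<Longrightarrow> f \<in> incidence_algebra \<Longrightarrow> g \<in> incidence_algebra \<Longrightarrow>
    \<phi> (f + g) = \<phi> f + \<phi> g"
  by (simp add: lie_automorphism_def fun_plus_eq_pointwise)

lemma lie_automorphism_scale:
  "lie_automorphism \<phi> \<Longrightarrow> f \<in> incidence_algebra \<Longrightarrow> \<phi> (inc_scale c f) = inc_scale c (\<phi> f)"
  by (simp add: lie_automorphism_def inc_scale_def)

lemma lie_automorphism_inc_jordan:
  "lie_automorphism \<phi> \<Longrightarrow> a \<in> incidence_algebra \<Longrightarrow> b \<in> incidence_algebra \<Longrightarrow>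
    \<phi> (inc_jordan a b) = inc_jordan (\<phi> a) (\<phi> b)"
  unfolding lie_automorphism_def inc_jordan_def fun_plus_eq_pointwise by blast

lemma lie_automorphism_zero: "lie_automorphism \<phi> \<Longrightarrow> \<phi> 0 = 0"
  by (intro additive_map_zero[where \<psi> = \<phi>] lie_automorphism_add)

subsection \<open>The square defect\<close>

definition square_defect ::
    "(('a::order \<Rightarrow> 'a \<Rightarrow> 'f::field) \<Rightarrow> ('a \<Rightarrow> 'a \<Rightarrow> 'f)) \<Rightarrow> ('a \<Rightarrow> 'a \<Rightarrow> 'f) \<Rightarrow> ('a \<Rightarrow> 'a \<Rightarrow> 'f)"
  where "square_defect \<phi> f = \<phi> (inc_mult f f) - inc_mult (\<phi> f) (\<phi> f)"

lemma square_defect_eq_0_iff: "square_defect \<phi> f = 0 \<longleftrightarrow> \<phi> (inc_mult f f) = inc_mult (\<phi> f) (\<phi> f)"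
  by (simp add: square_defect_def)

lemma square_defect_closed: "lie_automorphism \<phi> \<Longrightarrow> square_defect \<phi> f \<in> incidence_algebra"
  by (auto simp: square_defect_def lie_automorphism_closed)

lemma square_defect_add:
  assumes lie: "lie_automorphism \<phi>" and f: "f \<in> incidence_algebra" and g: "g \<in> incidence_algebra"
  shows "square_defect \<phi> (f + g) = square_defect \<phi> f + square_defect \<phi> g"
proof -
  have "\<phi> (inc_mult (f + g) (f + g)) = \<phi> (inc_mult f f + inc_mult g g) + \<phi> (inc_jordan f g)"
    unfolding inc_square_add by (rule lie_automorphism_add[OF lie]) auto
  also have "\<dots> = \<phi> (inc_mult f f) + \<phi> (inc_mult g g) + inc_jordan (\<phi> f) (\<phi> g)"
    by (simp only: lie_automorphism_add[OF lie] lie_automorphism_inc_jordan[OF lie f g]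
        incidence_algebra_inc_mult)
  finally have "\<phi> (inc_mult (f + g) (f + g))
      = \<phi> (inc_mult f f) + \<phi> (inc_mult g g) + inc_jordan (\<phi> f) (\<phi> g)" .
  moreover have "inc_mult (\<phi> (f + g)) (\<phi> (f + g))
      = inc_mult (\<phi> f) (\<phi> f) + inc_mult (\<phi> g) (\<phi> g) + inc_jordan (\<phi> f) (\<phi> g)"
    by (simp only: lie_automorphism_add[OF lie f g] inc_square_add)
  ultimately show ?thesis
    by (simp add: square_defect_def algebra_simps)
qed

lemma square_defect_scale:
  assumes "lie_automorphism \<phi>" "f \<in> incidence_algebra"
  shows "square_defect \<phi> (inc_scale c f) = inc_scale (c * c) (square_defect \<phi> f)"
  using assms
  by (simp add: square_defect_def inc_square_scale lie_automorphism_scale)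
    (simp add: inc_scale_def fun_eq_iff right_diff_distrib)

lemma square_defect_central:
  fixes \<phi> :: "('a::{order,finite} \<Rightarrow> 'a \<Rightarrow> 'f::field) \<Rightarrow> ('a \<Rightarrow> 'a \<Rightarrow> 'f)"
  assumes char2: "CHAR('f) = 2" and lie: "lie_automorphism \<phi>"
    and f: "f \<in> incidence_algebra" and g: "g \<in> incidence_algebra"
  shows "inc_mult (square_defect \<phi> f) g = inc_mult g (square_defect \<phi> f)"
proof -
  obtain h where h: "h \<in> incidence_algebra" "g = \<phi> h"
    using lie_automorphism_surj[OF lie g] by blast
  have "inc_jordan (\<phi> (inc_mult f f)) g = \<phi> (inc_jordan (inc_mult f f) h)"
    using h lie by (simp add: lie_automorphism_inc_jordan)
  also have "\<dots> = \<phi> (inc_jordan f (inc_jordan f h))"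
    by (simp add: char2_inc_jordan_square[OF char2])
  also have "\<dots> = inc_jordan (\<phi> f) (inc_jordan (\<phi> f) g)"
    using f h lie by (simp add: lie_automorphism_inc_jordan)
  also have "\<dots> = inc_jordan (inc_mult (\<phi> f) (\<phi> f)) g"
    by (simp add: char2_inc_jordan_square[OF char2])
  finally show ?thesis
    unfolding square_defect_def char2_commute_iff_inc_jordan_eq[OF char2] .
qed

lemma square_defect_nilpotent_eq_0:
  fixes \<phi> :: "('a::{order,finite} \<Rightarrow> 'a \<Rightarrow> 'f::field) \<Rightarrow> ('a \<Rightarrow> 'a \<Rightarrow> 'f)"
  assumes char2: "CHAR('f) = 2" and lie: "lie_automorphism \<phi>"
    and a: "a \<in> incidence_algebra" and b: "b \<in> incidence_algebra"
    and nil: "inc_mult a a = 0" and fixed: "inc_jordan b a = a"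
  shows "square_defect \<phi> a = 0"
proof (rule central_with_zero_diagonal_eq_zero)
  show "square_defect \<phi> a \<in> incidence_algebra"
    using lie by (rule square_defect_closed)
  show "inc_mult (square_defect \<phi> a) g = inc_mult g (square_defect \<phi> a)"
    if "g \<in> incidence_algebra" for g
    using square_defect_central[OF char2 lie a that] .
  have "inc_jordan (\<phi> b) (\<phi> a) = \<phi> a"
    using lie a b fixed by (simp flip: lie_automorphism_inc_jordan)
  then have "\<phi> a z z = 0" for z
    by (rule char2_inc_jordan_fixed_diagonal[OF char2])
  then show "square_defect \<phi> a z z = 0" for z
    using lie by (simp add: square_defect_def nil lie_automorphism_zero inc_mult_diag)
qed

lemma square_defect_inc_unit_eq_0:
  fixes \<phi> :: "('a::{order,finite} \<Rightarrow> 'a \<Rightarrow> 'f::field) \<Rightarrow> ('a \<Rightarrow> 'a \<Rightarrow> 'f)"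
  assumes char2: "CHAR('f) = 2" and lie: "lie_automorphism \<phi>"
    and idem: "\<And>x. \<phi> (inc_e x) \<in> inc_idempotents" and "u \<le> v"
  shows "square_defect \<phi> (inc_unit u v) = 0"
proof (cases "u = v")
  case True
  then show ?thesis
    using idem[of u] by (simp add: square_defect_def inc_idempotents_def inc_e_idempotent
        flip: inc_e_eq_inc_unit)
next
  case False
  with \<open>u \<le> v\<close> have "u < v" by simp
  then show ?thesis
    by (intro square_defect_nilpotent_eq_0[OF char2 lie _ incidence_algebra_inc_e[of u]])
      (simp_all add: incidence_algebra_inc_unit inc_unit_square inc_jordan_inc_e_inc_unit)
qed

lemma square_preserving_imp_idempotent_preserving:
  assumes "lie_automorphism \<phi>"
    and "\<forall>f\<in>incidence_algebra. \<phi> (inc_mult f f) = inc_mult (\<phi> f) (\<phi> f)"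
  shows "\<phi> ` inc_idempotents \<subseteq> inc_idempotents"
  using assms by (auto simp: inc_idempotents_def lie_automorphism_closed)

lemma inc_e_in_inc_idempotents: "inc_e x \<in> (inc_idempotents :: ('a::{order,finite} \<Rightarrow> 'a \<Rightarrow> 'f::field) set)"
  by (simp add: inc_idempotents_def inc_e_idempotent)

lemma inc_scale_zero [simp]: "inc_scale c 0 = 0"
  by (simp add: inc_scale_def fun_eq_iff)

lemma square_preserving_of_inc_e_idempotent:
  fixes \<phi> :: "('a::{order,finite} \<Rightarrow> 'a \<Rightarrow> 'f::field) \<Rightarrow> ('a \<Rightarrow> 'a \<Rightarrow> 'f)"
  assumes char2: "CHAR('f) = 2" and lie: "lie_automorphism \<phi>"
    and idem: "\<And>x. \<phi> (inc_e x) \<in> inc_idempotents" and f: "f \<in> incidence_algebra"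
  shows "\<phi> (inc_mult f f) = inc_mult (\<phi> f) (\<phi> f)"
proof -
  have units: "square_defect \<phi> (inc_scale c (inc_unit u v)) = 0" if "u \<le> v" for c u v
  proof -
    have "square_defect \<phi> (inc_scale c (inc_unit u v)) = inc_scale (c * c) (square_defect \<phi> (inc_unit u v))"
      using that by (intro square_defect_scale[OF lie] incidence_algebra_inc_unit)
    then show ?thesis
      by (simp only: square_defect_inc_unit_eq_0[OF char2 lie idem that] inc_scale_zero)
  qed
  have "square_defect \<phi> f = 0"
    by (rule additive_map_vanishing_on_units[where \<psi> = "square_defect \<phi>",
          OF square_defect_add[OF lie] units f])
  then show ?thesis
    by (simp add: square_defect_eq_0_iff)
qed

theorem lemma3p3:
  fixes \<phi> :: "('a::{order,finite} \<Rightarrow> 'a \<Rightarrow> 'f::field) \<Rightarrow> ('a \<Rightarrow> 'a \<Rightarrow> 'f)"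
  assumes "poset_connected TYPE('a)"
    and "CHAR('f) = 2"
    and "lie_automorphism \<phi>"
  shows "((\<forall>f\<in>incidence_algebra. \<phi> (inc_mult f f) = inc_mult (\<phi> f) (\<phi> f))
            \<longleftrightarrow> \<phi> ` inc_idempotents \<subseteq> inc_idempotents)
       \<and> (\<phi> ` inc_idempotents \<subseteq> inc_idempotents
            \<longleftrightarrow> (\<forall>x. \<phi> (inc_e x) \<in> inc_idempotents))"
proof -
  let ?squares = "\<forall>f\<in>incidence_algebra. \<phi> (inc_mult f f) = inc_mult (\<phi> f) (\<phi> f)"
  let ?idempotents = "\<phi> ` inc_idempotents \<subseteq> inc_idempotents"
  let ?units = "\<forall>x. \<phi> (inc_e x) \<in> inc_idempotents"
  have "?squares \<Longrightarrow> ?idempotents"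
    by (rule square_preserving_imp_idempotent_preserving[OF assms(3)])
  moreover have "?idempotents \<Longrightarrow> ?units"
    using inc_e_in_inc_idempotents by blast
  moreover have "?units \<Longrightarrow> ?squares"
    using square_preserving_of_inc_e_idempotent[OF assms(2,3)] by blast
  ultimately show ?thesis
    by argo
qed

end
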